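(* Let $(P,\leqslant)$ be a locally finite poset having a minimum element $\hat{0}$, and suppose $P$ has the Möbius uncertainty property, i.e. whenever $f,g:P\to\mathbb{C}$ are functions, neither identically zero, with $g(z)=\sum_{x\leqslant z} f(x)$ for all $z\in P$, at least one of $\operatorname{supp}(f)=\{x:f(x)\neq0\}$ and $\operatorname{supp}(g)=\{x:g(x)\neq0\}$ is infinite. Then for every subset $S\subset P$ with $1\leqslant |S|\leqslant 2$, there exists $z\in S$ such that there are infinitely many $x\in P$ with $x\geqslant z$ but $x\not\geqslant y$ for every $y\in S\setminus\{z\}$.
   Context: A poset is locally finite if every interval $\{z: x\leqslant z\leqslant y\}$ is finite. *)

theory Defs
  imports Complex_Main
begin

text \<open>The poset is the whole carrier of a type of class order.\<close>

definition locally_finite_poset :: "'a::order itself \<Rightarrow> bool" where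
  "locally_finite_poset _ \<longleftrightarrow> (\<forall>x y::'a. finite {x..y})"

definition supp :: "('a \<Rightarrow> complex) \<Rightarrow> 'a set" where
  "supp f = {x. f x \<noteq> 0}"

definition mobius_uncertainty :: "'a::order itself \<Rightarrow> bool" where
  "mobius_uncertainty _ \<longleftrightarrow>
     (\<forall>(f::'a \<Rightarrow> complex) g. f \<noteq> (\<lambda>_. 0) \<longrightarrow> g \<noteq> (\<lambda>_. 0) \<longrightarrow>
        (\<forall>z. g z = (\<Sum>x\<in>{..z}. f x)) \<longrightarrow>
        infinite (supp f) \<or> infinite (supp g))"

end

theory Submission
  imports Defs
begin

text \<open>
  A nonzero finitely supported function has a nonzero zeta transform: at a minimal point \<open>m\<close>
  of its support the transform equals \<open>f m\<close>. So under the uncertainty property the zeta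
  transform of such a function has infinite support. Applied to \<open>\<delta>\<^sub>a\<close> this makes the
  up-set of \<open>a\<close> infinite, and applied to \<open>\<delta>\<^sub>a - \<delta>\<^sub>b\<close> it makes the symmetric
  difference of the up-sets of \<open>a\<close> and \<open>b\<close> infinite.
\<close>

lemma finite_atMost_if_bot:
  assumes "locally_finite_poset TYPE('a::order)" and "\<forall>x. (z0::'a) \<le> x"
  shows "finite {..w::'a}"
proof -
  have "{..w} = {z0..w}" using assms(2) by auto
  then show ?thesis using assms(1) unfolding locally_finite_poset_def by simp
qed

lemma sum_atMost_delta:
  fixes a w :: "'a::order"
  assumes "finite {..w}"
  shows "(\<Sum>x\<in>{..w}. if x = a then 1 else 0 :: complex) = (if a \<le> w then 1 else 0)"
  using assms by (simp add: sum.delta')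

lemma zeta_transform_at_minimal:
  fixes f :: "'a::order \<Rightarrow> complex"
  assumes "finite {..m}" and "\<forall>x\<in>supp f. x \<le> m \<longrightarrow> m = x"
  shows "(\<Sum>x\<in>{..m}. f x) = f m"
proof -
  have "(\<Sum>x\<in>{..m} - {m}. f x) = 0"
    using assms(2) by (intro sum.neutral) (auto simp: supp_def)
  then show ?thesis
    using sum.remove[OF assms(1), of m f] by simp
qed

context
  assumes uncertainty: "mobius_uncertainty TYPE('a::order)"
    and finite_atMost: "\<And>w::'a. finite {..w}"
begin

lemma infinite_supp_zeta_transform:
  fixes f :: "'a \<Rightarrow> complex"
  assumes "finite (supp f)" and "f \<noteq> (\<lambda>_. 0)"
  shows "infinite (supp (\<lambda>z. \<Sum>x\<in>{..z}. f x))"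
proof -
  have "supp f \<noteq> {}" using assms(2) by (auto simp: supp_def)
  then obtain m where m: "m \<in> supp f" and minimal: "\<forall>x\<in>supp f. x \<le> m \<longrightarrow> m = x"
    using finite_has_minimal[OF assms(1)] by blast
  have "(\<Sum>x\<in>{..m}. f x) \<noteq> 0"
    using zeta_transform_at_minimal[OF finite_atMost minimal] m by (simp add: supp_def)
  then have "(\<lambda>z. \<Sum>x\<in>{..z}. f x) \<noteq> (\<lambda>_. 0)" by (metis (mono_tags))
  then show ?thesis
    using uncertainty assms unfolding mobius_uncertainty_def by blast
qed

lemma infinite_up_set: "infinite {x::'a. a \<le> x}"
proof -
  define f :: "'a \<Rightarrow> complex" where "f x = (if x = a then 1 else 0)" for x
  have "supp f = {a}" by (auto simp: supp_def f_def)
  moreover have "f \<noteq> (\<lambda>_. 0)" by (metis f_def one_neq_zero)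
  ultimately have "infinite (supp (\<lambda>z. \<Sum>x\<in>{..z}. f x))"
    by (intro infinite_supp_zeta_transform) auto
  moreover have "supp (\<lambda>z. \<Sum>x\<in>{..z}. f x) = {x. a \<le> x}"
    by (simp add: f_def sum_atMost_delta[OF finite_atMost] supp_def)
  ultimately show ?thesis by simp
qed

lemma infinite_up_set_diff:
  fixes a b :: 'a
  assumes "a \<noteq> b"
  shows "infinite {x. a \<le> x \<and> \<not> b \<le> x} \<or> infinite {x. b \<le> x \<and> \<not> a \<le> x}"
proof -
  define f :: "'a \<Rightarrow> complex"
    where "f x = (if x = a then 1 else 0) - (if x = b then 1 else 0)" for x
  have "supp f = {a, b}" using assms by (auto simp: supp_def f_def)
  moreover have "f a \<noteq> 0" using assms by (simp add: f_def)
  ultimately have "infinite (supp (\<lambda>z. \<Sum>x\<in>{..z}. f x))"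
    by (intro infinite_supp_zeta_transform) auto
  moreover have "supp (\<lambda>z. \<Sum>x\<in>{..z}. f x)
      = {x. a \<le> x \<and> \<not> b \<le> x} \<union> {x. b \<le> x \<and> \<not> a \<le> x}"
    by (auto simp: f_def sum_subtractf sum_atMost_delta[OF finite_atMost] supp_def)
  ultimately show ?thesis by simp
qed

end

theorem theorem1p4:
  assumes "locally_finite_poset TYPE('a::order)"
    and "\<exists>z0::'a. \<forall>x. z0 \<le> x"
    and "mobius_uncertainty TYPE('a)"
    and "finite (S :: 'a set)" and "1 \<le> card S" and "card S \<le> 2"
  shows "\<exists>z\<in>S. infinite {x. z \<le> x \<and> (\<forall>y\<in>S - {z}. \<not> y \<le> x)}"
proof -
  have finite_atMost: "finite {..w}" for w :: 'a
    using assms(1,2) finite_atMost_if_bot by blast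
  consider a where "S = {a}" | a b where "S = {a, b}" and "a \<noteq> b"
    using assms(5,6) card_1_singletonE card_2_iff
    by (metis One_nat_def le_Suc_eq le_antisym numeral_2_eq_2)
  then show ?thesis
  proof cases
    case (1 a)
    then show ?thesis
      using infinite_up_set[OF assms(3) finite_atMost] by simp
  next
    case (2 a b)
    then have "S - {a} = {b}" and "S - {b} = {a}" by auto
    then show ?thesis
      using infinite_up_set_diff[OF assms(3) finite_atMost \<open>a \<noteq> b\<close>] \<open>S = {a, b}\<close> by auto
  qed
qed

end
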